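(* The bilinear form $\omega(X,Y)=\operatorname{tr}_c\big(X[D,Y]\big)$ is a continuous Lie algebra $2$-cocycle on $\mathfrak g$, i.e. it is skew-symmetric and satisfies $\omega(X,[Y,Z])+\omega(Y,[Z,X])+\omega(Z,[X,Y])=0$ for all $X,Y,Z\in\mathfrak g$. It defines a non-trivial central extension of $\mathfrak g$: there is no continuous linear functional $\theta\colon\mathfrak g\to\mathbb C$ with $\omega(X,Y)=\theta([X,Y])$ for all $X,Y\in\mathfrak g$.
   Context: Let $H$ be a complex separable Hilbert space with orthonormal basis $\{e_n\}_{n\in\mathbb Z}$, and let $D$ be the unbounded self-adjoint operator with $De_n=ne_n$. Let $\mathfrak g$ be the real Lie algebra of bounded skew-adjoint operators $X$ on $H$ such that $[D,X]$ is Hilbert--Schmidt. It is a Banach Lie algebra with norm $\|X\|=\sup_n|\langle e_n,Xe_n\rangle|+\|[D,X]\|_2$, where $\|\cdot\|_2$ is the Hilbert--Schmidt norm. The conditional trace is $\operatorname{tr}_c(T)=\sum_{n\in\mathbb Z}\langle e_n,Te_n\rangle$. For $X,Y\in\mathfrak g$ the series defining $\operatorname{tr}_c(X[D,Y])$ converges absolutely. *)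

theory Defs
  imports "HOL-Analysis.Analysis"
begin

text \<open>H = l2(Z), modelled as square-summable functions int => complex.
  Operators are maps (int => complex) => (int => complex); only their behaviour on l2 matters.
  The basis vector e_n is delta n, and D e_n = n e_n.\<close>

type_synonym vec = "int \<Rightarrow> complex"
type_synonym op = "vec \<Rightarrow> vec"

definition ell2 :: "vec set" where
  "ell2 = {x. (\<lambda>n. (cmod (x n))\<^sup>2) summable_on UNIV}"

definition l2norm :: "vec \<Rightarrow> real" where
  "l2norm x = sqrt (\<Sum>\<^sub>\<infinity>n. (cmod (x n))\<^sup>2)"

definition l2inner :: "vec \<Rightarrow> vec \<Rightarrow> complex" where
  "l2inner x y = (\<Sum>\<^sub>\<infinity>n. cnj (x n) * y n)"

definition delta :: "int \<Rightarrow> vec" where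
  "delta n = (\<lambda>m. if m = n then 1 else 0)"

definition entry :: "op \<Rightarrow> int \<Rightarrow> int \<Rightarrow> complex" where
  "entry T m n = T (delta n) m"

definition linear_on_l2 :: "op \<Rightarrow> bool" where
  "linear_on_l2 T \<longleftrightarrow>
     (\<forall>x\<in>ell2. \<forall>y\<in>ell2. T (\<lambda>m. x m + y m) = (\<lambda>m. T x m + T y m)) \<and>
     (\<forall>x\<in>ell2. \<forall>c::complex. T (\<lambda>m. c * x m) = (\<lambda>m. c * T x m))"

definition bounded_op :: "op \<Rightarrow> bool" where
  "bounded_op T \<longleftrightarrow> linear_on_l2 T \<and> (\<forall>x\<in>ell2. T x \<in> ell2) \<and>
     (\<exists>C. \<forall>x\<in>ell2. l2norm (T x) \<le> C * l2norm x)"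

definition skew_adjoint :: "op \<Rightarrow> bool" where
  "skew_adjoint T \<longleftrightarrow> (\<forall>x\<in>ell2. \<forall>y\<in>ell2. l2inner x (T y) = - l2inner (T x) y)"

text \<open>The commutator [D,T], given through its matrix entries (m - n) <e_m, T e_n>.\<close>
definition commD :: "op \<Rightarrow> op" where
  "commD T = (\<lambda>x m. \<Sum>\<^sub>\<infinity>n. of_int (m - n) * entry T m n * x n)"

definition hilbert_schmidt_entries :: "op \<Rightarrow> bool" where
  "hilbert_schmidt_entries T \<longleftrightarrow> (\<lambda>(m,n). (cmod (entry T m n))\<^sup>2) summable_on (UNIV :: (int \<times> int) set)"

definition hs_norm :: "op \<Rightarrow> real" where
  "hs_norm T = sqrt (\<Sum>\<^sub>\<infinity>(m,n)\<in>(UNIV :: (int \<times> int) set). (cmod (entry T m n))\<^sup>2)"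

definition gset :: "op set" where
  "gset = {X. bounded_op X \<and> skew_adjoint X \<and> hilbert_schmidt_entries (commD X)}"

definition gnorm :: "op \<Rightarrow> real" where
  "gnorm X = (SUP n. cmod (entry X n n)) + hs_norm (commD X)"

definition lie :: "op \<Rightarrow> op \<Rightarrow> op" where
  "lie X Y = (\<lambda>x m. X (Y x) m - Y (X x) m)"

definition op_add :: "op \<Rightarrow> op \<Rightarrow> op" where
  "op_add X Y = (\<lambda>x m. X x m + Y x m)"

definition op_scale :: "real \<Rightarrow> op \<Rightarrow> op" where
  "op_scale a X = (\<lambda>x m. complex_of_real a * X x m)"

definition trc :: "op \<Rightarrow> complex" where
  "trc T = (\<Sum>\<^sub>\<infinity>n. entry T n n)"

definition omega :: "op \<Rightarrow> op \<Rightarrow> complex" where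
  "omega X Y = trc (\<lambda>x. X (commD Y x))"

end

theory Submission
  imports Defs
begin

(*
  Everything is computed with matrix entries w.r.t. the basis e_n.  Writing X_mn for the entries
  of X and [D,X]_mn = (m - n) X_mn, the definition unfolds to the absolutely convergent double sum
      omega(X,Y) = sum_{n,m} X_nm [D,Y]_mn.
  The diagonal of [D,Y] vanishes and |X_nm| <= |[D,X]_nm| off the diagonal, so Cauchy-Schwarz
  bounds this sum by ||[D,X]||_2 ||[D,Y]||_2: this gives absolute convergence, continuity and
  (after interchanging the two sums) skew-symmetry.  For the cocycle identity, the Leibniz rule
  [D,YZ] = [D,Y]Z + Y[D,Z] shows that the double-sum formula applies to omega(X,[Y,Z]), which then
  becomes a difference of the triple sums tr([D,A]BC) = sum_{a,b,c} [D,A]_ab B_bc C_ca; these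
  converge absolutely, and their cyclic sums cancel since (a - b) + (b - c) + (c - a) = 0.
  Non-triviality is witnessed by explicit rank-two elements X_n, Y_n with [X_n,Y_n] = 2i(P_n - P_0)
  (P_k the projection onto e_k), where omega(X_n,Y_n) = -2in grows while a continuous theta would
  stay bounded on the P_k.
*)

section \<open>Unordered sums\<close>

lemma infsum_finite_support:
  assumes "finite S" "\<And>x. x \<notin> S \<Longrightarrow> f x = 0"
  shows "f summable_on UNIV" and "infsum f UNIV = sum f S"
proof -
  have "f summable_on S" using assms(1) by simp
  then show "f summable_on UNIV"
    by (rule summable_on_cong_neutral[THEN iffD1, rotated -1]) (use assms in auto)
  have "infsum f UNIV = infsum f S" by (rule infsum_cong_neutral) (use assms in auto)
  then show "infsum f UNIV = sum f S" using assms(1) by simp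
qed

text \<open>The AM-GM inequality makes products of square-summable functions absolutely summable.\<close>
lemma summable_on_abs_mult:
  fixes f g :: "'a \<Rightarrow> real"
  assumes "(\<lambda>x. (f x)\<^sup>2) summable_on A" "(\<lambda>x. (g x)\<^sup>2) summable_on A"
  shows "(\<lambda>x. \<bar>f x * g x\<bar>) summable_on A"
proof (rule summable_on_comparison_test)
  show "(\<lambda>x. ((f x)\<^sup>2 + (g x)\<^sup>2) / 2) summable_on A"
    using summable_on_cmult_right[OF summable_on_add[OF assms], of "1/2"] by simp
  fix x
  have "0 \<le> (\<bar>f x\<bar> - \<bar>g x\<bar>)\<^sup>2" by simp
  then show "\<bar>f x * g x\<bar> \<le> ((f x)\<^sup>2 + (g x)\<^sup>2) / 2"
    by (simp add: power2_eq_square algebra_simps abs_mult)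
qed auto

lemma summable_on_mult_square_summable:
  fixes f g :: "'a \<Rightarrow> real"
  assumes "(\<lambda>x. (f x)\<^sup>2) summable_on A" "(\<lambda>x. (g x)\<^sup>2) summable_on A"
  shows "(\<lambda>x. f x * g x) summable_on A"
  using abs_summable_summable[of "\<lambda>x. f x * g x" A] summable_on_abs_mult[OF assms] by simp

lemma cauchy_schwarz_infsum:
  fixes f g :: "'a \<Rightarrow> real"
  assumes f2: "(\<lambda>x. (f x)\<^sup>2) summable_on A" and g2: "(\<lambda>x. (g x)\<^sup>2) summable_on A"
  shows "(\<Sum>\<^sub>\<infinity>x\<in>A. f x * g x) \<le> sqrt (\<Sum>\<^sub>\<infinity>x\<in>A. (f x)\<^sup>2) * sqrt (\<Sum>\<^sub>\<infinity>x\<in>A. (g x)\<^sup>2)"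
proof (rule infsum_le_finite_sums[OF summable_on_mult_square_summable[OF f2 g2]])
  fix F assume F: "finite F" "F \<subseteq> A"
  have "(\<Sum>x\<in>F. f x * g x) \<le> sqrt ((\<Sum>x\<in>F. f x * g x)\<^sup>2)" by simp
  also have "\<dots> \<le> sqrt (\<Sum>x\<in>F. (f x)\<^sup>2) * sqrt (\<Sum>x\<in>F. (g x)\<^sup>2)"
    unfolding real_sqrt_mult[symmetric] by (rule real_sqrt_le_mono[OF Cauchy_Schwarz_ineq_sum])
  also have "\<dots> \<le> sqrt (\<Sum>\<^sub>\<infinity>x\<in>A. (f x)\<^sup>2) * sqrt (\<Sum>\<^sub>\<infinity>x\<in>A. (g x)\<^sup>2)"
    by (intro mult_mono real_sqrt_le_mono finite_sum_le_infsum f2 g2 F)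
       (auto simp: sum_nonneg intro: infsum_nonneg)
  finally show "(\<Sum>x\<in>F. f x * g x) \<le> \<dots>" .
qed

lemma infsum_diff:
  fixes f g :: "'a \<Rightarrow> 'b::{topological_ab_group_add, t2_space}"
  assumes "f summable_on A" "g summable_on A"
  shows "(\<Sum>\<^sub>\<infinity>x\<in>A. f x - g x) = infsum f A - infsum g A"
  using infsum_add[OF assms(1) summable_on_uminus[THEN iffD2, OF assms(2)]] by (simp add: infsum_uminus)

lemma summable_on_pairD:
  fixes f :: "'a \<Rightarrow> 'b \<Rightarrow> 'c::{banach, uniform_topological_group_add}"
  assumes "(\<lambda>(x,y). f x y) summable_on UNIV"
  shows "f x summable_on UNIV" and "(\<lambda>x. \<Sum>\<^sub>\<infinity>y. f x y) summable_on UNIV"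
    and "(\<Sum>\<^sub>\<infinity>x. \<Sum>\<^sub>\<infinity>y. f x y) = (\<Sum>\<^sub>\<infinity>(x,y). f x y)"
  using summable_on_SigmaD1[of f UNIV "\<lambda>_. UNIV" x] summable_on_Sigma_banach[of f UNIV "\<lambda>_. UNIV"]
    infsum_Sigma'_banach[of f UNIV "\<lambda>_. UNIV"] assms
  by (simp_all)

lemma summable_on_pair_swap:
  fixes f :: "'a \<Rightarrow> 'b \<Rightarrow> 'c::banach"
  assumes "(\<lambda>(a,b). f a b) summable_on UNIV"
  shows "(\<lambda>(b,a). f a b) summable_on UNIV"
  using summable_on_swap[of "\<lambda>(a,b). f a b" UNIV UNIV] assms by simp

lemma summable_on_pair_dominated:
  fixes f :: "'a \<Rightarrow> 'b \<Rightarrow> real"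
  assumes nonneg: "\<And>x y. 0 \<le> f x y" and rows: "\<And>x. f x summable_on UNIV"
    and dom: "\<And>x. (\<Sum>\<^sub>\<infinity>y. f x y) \<le> h x" and h: "h summable_on UNIV"
  shows "(\<lambda>(x,y). f x y) summable_on UNIV" and "(\<Sum>\<^sub>\<infinity>(x,y). f x y) \<le> (\<Sum>\<^sub>\<infinity>x. h x)"
proof -
  have outer: "(\<lambda>x. \<Sum>\<^sub>\<infinity>y. f x y) summable_on UNIV"
    by (rule summable_on_comparison_test[OF h]) (use dom nonneg in \<open>auto simp: infsum_nonneg\<close>)
  have "(\<lambda>p. f (fst p) (snd p)) summable_on Sigma UNIV (\<lambda>_. UNIV)"
    by (rule summable_on_SigmaI[OF _ outer]) (use rows nonneg in auto)
  then show sum: "(\<lambda>(x,y). f x y) summable_on UNIV"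
    by (simp add: case_prod_unfold)
  have "(\<Sum>\<^sub>\<infinity>(x,y). f x y) = (\<Sum>\<^sub>\<infinity>x. \<Sum>\<^sub>\<infinity>y. f x y)"
    using summable_on_pairD(3)[OF sum] by simp
  also have "\<dots> \<le> (\<Sum>\<^sub>\<infinity>x. h x)" by (rule infsum_mono[OF outer h dom])
  finally show "(\<Sum>\<^sub>\<infinity>(x,y). f x y) \<le> (\<Sum>\<^sub>\<infinity>x. h x)" .
qed

lemma summable_on_from_injective:
  assumes "inj h" "(f \<circ> h) summable_on UNIV" "\<And>p. p \<notin> range h \<Longrightarrow> f p = 0"
  shows "f summable_on UNIV"
proof -
  have "f summable_on range h" using summable_on_reindex[OF assms(1)] assms(2) by blast
  then show ?thesis by (rule summable_on_cong_neutral[THEN iffD1, rotated -1]) (use assms(3) in auto)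
qed

text \<open>The triple sum of a cyclic product of three Hilbert-Schmidt-type kernels converges; this is
  what makes the trace of a product of three operators meaningful.\<close>
lemma triple_summable:
  fixes \<alpha> \<beta> \<gamma> :: "'a \<Rightarrow> 'a \<Rightarrow> real"
  assumes na: "\<And>a b. 0 \<le> \<alpha> a b" and nb: "\<And>a b. 0 \<le> \<beta> a b" and nc: "\<And>a b. 0 \<le> \<gamma> a b"
    and sa: "(\<lambda>(a,b). (\<alpha> a b)\<^sup>2) summable_on UNIV"
    and sb: "(\<lambda>(a,b). (\<beta> a b)\<^sup>2) summable_on UNIV"
    and sc: "(\<lambda>(a,b). (\<gamma> a b)\<^sup>2) summable_on UNIV"
  shows "(\<lambda>(a,b,c). \<alpha> a b * \<beta> b c * \<gamma> c a) summable_on UNIV"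
proof -
  define R where "R b = (\<Sum>\<^sub>\<infinity>c. (\<beta> b c)\<^sup>2)" for b
  define S where "S a = (\<Sum>\<^sub>\<infinity>c. (\<gamma> c a)\<^sup>2)" for a
  define \<rho> where "\<rho> a = (\<Sum>\<^sub>\<infinity>b. (\<alpha> a b)\<^sup>2)" for a
  have sc': "(\<lambda>(a,c). (\<gamma> c a)\<^sup>2) summable_on UNIV"
    using summable_on_pair_swap[of "\<lambda>c a. (\<gamma> c a)\<^sup>2"] sc by simp
  note rows = summable_on_pairD(1,2)
  have nonneg: "0 \<le> R b" "0 \<le> S a" "0 \<le> \<rho> a" for a b
    unfolding R_def S_def \<rho>_def by (simp_all add: infsum_nonneg)
  have sqrt_sq: "(\<lambda>x. (sqrt (F x))\<^sup>2) summable_on UNIV"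
    if "F summable_on UNIV" "\<And>x. 0 \<le> F x" for F :: "'a \<Rightarrow> real" using that by simp
  \<comment> \<open>for fixed a and b, Cauchy-Schwarz in c\<close>
  have inner: "(\<lambda>c. \<alpha> a b * \<beta> b c * \<gamma> c a) summable_on UNIV \<and>
      (\<Sum>\<^sub>\<infinity>c. \<alpha> a b * \<beta> b c * \<gamma> c a) \<le> sqrt (S a) * (\<alpha> a b * sqrt (R b))" for a b
  proof -
    have s: "(\<lambda>c. \<beta> b c * \<gamma> c a) summable_on UNIV"
      by (rule summable_on_mult_square_summable[OF rows(1)[OF sb] rows(1)[OF sc']])
    have "(\<Sum>\<^sub>\<infinity>c. \<alpha> a b * \<beta> b c * \<gamma> c a) = \<alpha> a b * (\<Sum>\<^sub>\<infinity>c. \<beta> b c * \<gamma> c a)"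
      by (simp add: mult.assoc infsum_cmult_right')
    also have "\<dots> \<le> \<alpha> a b * (sqrt (R b) * sqrt (S a))"
      unfolding R_def S_def
      by (rule mult_left_mono[OF cauchy_schwarz_infsum[OF rows(1)[OF sb] rows(1)[OF sc']] na])
    finally show ?thesis
      using summable_on_cmult_right[OF s, of "\<alpha> a b"] by (simp add: mult_ac)
  qed
  \<comment> \<open>for fixed a, domination in b and Cauchy-Schwarz again\<close>
  have middle: "(\<lambda>(b,c). \<alpha> a b * \<beta> b c * \<gamma> c a) summable_on UNIV \<and>
      (\<Sum>\<^sub>\<infinity>(b,c). \<alpha> a b * \<beta> b c * \<gamma> c a) \<le> sqrt (S a) * (sqrt (\<rho> a) * sqrt (\<Sum>\<^sub>\<infinity>b. R b))" for a
  proof -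
    have R: "(\<lambda>b. (sqrt (R b))\<^sup>2) summable_on UNIV"
      using sqrt_sq[OF rows(2)[OF sb]] nonneg by (simp add: R_def)
    have h: "(\<lambda>b. sqrt (S a) * (\<alpha> a b * sqrt (R b))) summable_on UNIV"
      by (intro summable_on_cmult_right summable_on_mult_square_summable[OF rows(1)[OF sa] R])
    have "(\<Sum>\<^sub>\<infinity>b. sqrt (S a) * (\<alpha> a b * sqrt (R b))) = sqrt (S a) * (\<Sum>\<^sub>\<infinity>b. \<alpha> a b * sqrt (R b))"
      by (simp add: infsum_cmult_right')
    also have "\<dots> \<le> sqrt (S a) * (sqrt (\<rho> a) * sqrt (\<Sum>\<^sub>\<infinity>b. R b))"
      using cauchy_schwarz_infsum[OF rows(1)[OF sa, of a] R] nonneg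
      by (intro mult_left_mono) (simp_all add: \<rho>_def)
    finally show ?thesis
      using summable_on_pair_dominated[of "\<lambda>b c. \<alpha> a b * \<beta> b c * \<gamma> c a", OF _ _ _ h] inner na nb nc
      by force
  qed
  \<comment> \<open>finally domination in a\<close>
  have "S summable_on UNIV" "\<rho> summable_on UNIV"
    using rows(2)[OF sc'] rows(2)[OF sa] unfolding S_def[abs_def] \<rho>_def[abs_def] by simp_all
  then have "(\<lambda>a. sqrt (S a) * sqrt (\<rho> a)) summable_on UNIV"
    using nonneg by (intro summable_on_mult_square_summable sqrt_sq)
  then have dom: "(\<lambda>a. sqrt (S a) * sqrt (\<rho> a) * sqrt (\<Sum>\<^sub>\<infinity>b. R b)) summable_on UNIV"
    by (rule summable_on_cmult_left)
  define F where "F a = (\<lambda>(b,c). \<alpha> a b * \<beta> b c * \<gamma> c a)" for a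
  have "(\<lambda>(a,p). F a p) summable_on UNIV"
  proof (rule summable_on_pair_dominated(1)[OF _ _ _ dom])
    show "0 \<le> F a p" for a p using na nb nc by (auto simp: F_def case_prod_unfold)
    show "F a summable_on UNIV" for a using middle by (simp add: F_def)
    show "(\<Sum>\<^sub>\<infinity>p. F a p) \<le> sqrt (S a) * sqrt (\<rho> a) * sqrt (\<Sum>\<^sub>\<infinity>b. R b)" for a
      using middle[of a] by (simp add: F_def mult.assoc)
  qed
  then show ?thesis by (simp add: F_def case_prod_unfold)
qed

section \<open>The sequence space l2 and matrix entries\<close>

lemma delta_ell2: "delta n \<in> ell2"
  unfolding ell2_def delta_def mem_Collect_eq by (rule infsum_finite_support(1)[of "{n}"]) auto

lemma l2inner_delta_left: "l2inner (delta m) y = y m"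
  unfolding l2inner_def delta_def by (subst infsum_finite_support(2)[of "{m}"]) auto

lemma l2inner_delta_right: "l2inner x (delta m) = cnj (x m)"
  unfolding l2inner_def delta_def by (subst infsum_finite_support(2)[of "{m}"]) auto

lemma l2norm_delta: "l2norm (delta m) = 1"
  unfolding l2norm_def delta_def by (subst infsum_finite_support(2)[of "{m}"]) auto

lemma ell2_finite_sum_le:
  assumes "x \<in> ell2" "finite F"
  shows "(\<Sum>m\<in>F. (cmod (x m))\<^sup>2) \<le> (\<Sum>\<^sub>\<infinity>m. (cmod (x m))\<^sup>2)"
  using finite_sum_le_infsum[of "\<lambda>m. (cmod (x m))\<^sup>2" UNIV F] assms by (simp add: ell2_def)

lemma ell2_scale: "x \<in> ell2 \<Longrightarrow> (\<lambda>m. c * x m) \<in> ell2"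
  unfolding ell2_def by (auto simp: norm_mult power_mult_distrib intro: summable_on_cmult_right)

lemma ell2_add:
  assumes "x \<in> ell2" "y \<in> ell2"
  shows "(\<lambda>m. x m + y m) \<in> ell2"
proof -
  have "(\<lambda>m. 2 * (cmod (x m))\<^sup>2 + 2 * (cmod (y m))\<^sup>2) summable_on UNIV"
    using assms unfolding ell2_def by (auto intro!: summable_on_add summable_on_cmult_right)
  moreover have "(cmod (x m + y m))\<^sup>2 \<le> 2 * (cmod (x m))\<^sup>2 + 2 * (cmod (y m))\<^sup>2" for m
  proof -
    have "(cmod (x m + y m))\<^sup>2 \<le> (cmod (x m) + cmod (y m))\<^sup>2"
      by (simp add: power_mono norm_triangle_ineq)
    also have "\<dots> \<le> 2 * (cmod (x m))\<^sup>2 + 2 * (cmod (y m))\<^sup>2"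
      using zero_le_power2[of "cmod (x m) - cmod (y m)"] by (simp add: power2_eq_square algebra_simps)
    finally show ?thesis .
  qed
  ultimately show ?thesis
    unfolding ell2_def by (auto intro: summable_on_comparison_test)
qed

lemma ell2_diff: "x \<in> ell2 \<Longrightarrow> y \<in> ell2 \<Longrightarrow> (\<lambda>m. x m - y m) \<in> ell2"
  using ell2_add[of x "\<lambda>m. (-1) * y m"] ell2_scale[of y "-1"] by simp

lemma ell2_prod_abs_summable:
  assumes "x \<in> ell2" "y \<in> ell2"
  shows "(\<lambda>k. cmod (x k) * cmod (y k)) summable_on UNIV"
  using summable_on_abs_mult[of "\<lambda>k. cmod (x k)" UNIV "\<lambda>k. cmod (y k)"] assms
  unfolding ell2_def by (simp add: abs_mult)

lemma ell2_prod_summable: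
  assumes "x \<in> ell2" "y \<in> ell2"
  shows "(\<lambda>k. x k * y k) summable_on UNIV"
  using ell2_prod_abs_summable[OF assms]
  by (simp add: summable_on_iff_abs_summable_on_complex norm_mult)

lemma entry_skew:
  assumes "skew_adjoint X"
  shows "entry X m n = - cnj (entry X n m)"
proof -
  have "entry X m n = l2inner (delta m) (X (delta n))"
    by (simp add: entry_def l2inner_delta_left)
  also have "\<dots> = - l2inner (X (delta m)) (delta n)"
    using assms delta_ell2 unfolding skew_adjoint_def by blast
  also have "\<dots> = - cnj (entry X n m)"
    by (simp add: l2inner_delta_right entry_def)
  finally show ?thesis .
qed

lemma skew_apply_eq_row_sum:
  assumes "skew_adjoint X" "x \<in> ell2"
  shows "X x m = (\<Sum>\<^sub>\<infinity>k. entry X m k * x k)"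
proof -
  have "X x m = l2inner (delta m) (X x)" by (simp add: l2inner_delta_left)
  also have "\<dots> = - l2inner (X (delta m)) x"
    using assms delta_ell2 unfolding skew_adjoint_def by blast
  also have "\<dots> = (\<Sum>\<^sub>\<infinity>k. - (cnj (entry X k m) * x k))"
    by (simp add: l2inner_def entry_def infsum_uminus)
  also have "\<dots> = (\<Sum>\<^sub>\<infinity>k. entry X m k * x k)"
    by (rule infsum_cong) (simp add: entry_skew[OF assms(1), of m])
  finally show ?thesis .
qed

lemma col_ell2:
  assumes "bounded_op X" shows "(\<lambda>m. entry X m n) \<in> ell2"
  using assms delta_ell2 unfolding bounded_op_def entry_def by blast

lemma row_ell2:
  assumes "bounded_op X" "skew_adjoint X" shows "(\<lambda>k. entry X m k) \<in> ell2"
  using col_ell2[OF assms(1), of m] unfolding ell2_def by (subst entry_skew[OF assms(2)]) simp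

lemma entry_bound:
  assumes "bounded_op X" shows "\<exists>K. \<forall>m n. cmod (entry X m n) \<le> K"
proof -
  obtain C where C: "\<And>x. x \<in> ell2 \<Longrightarrow> l2norm (X x) \<le> C * l2norm x"
    using assms unfolding bounded_op_def by blast
  have "cmod (entry X m n) \<le> C" for m n
  proof -
    have "(cmod (entry X m n))\<^sup>2 \<le> (\<Sum>\<^sub>\<infinity>k. (cmod (X (delta n) k))\<^sup>2)"
      using ell2_finite_sum_le[OF col_ell2[OF assms, of n], of "{m}"] by (simp add: entry_def)
    then have "cmod (entry X m n) \<le> l2norm (X (delta n))"
      unfolding l2norm_def by (rule real_le_rsqrt)
    also have "\<dots> \<le> C" using C[OF delta_ell2, of n] by (simp add: l2norm_delta)
    finally show ?thesis .
  qed
  then show ?thesis by blast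
qed

section \<open>Entries of the commutator with D\<close>

definition dentry :: "op \<Rightarrow> int \<Rightarrow> int \<Rightarrow> complex" where
  "dentry X m n = of_int (m - n) * entry X m n"

lemma commD_delta: "commD X (delta n) = (\<lambda>m. dentry X m n)"
  unfolding commD_def dentry_def delta_def
  by (rule ext, subst infsum_finite_support(2)[of "{n}"]) auto

lemma entry_commD: "entry (commD X) m n = dentry X m n"
  by (simp add: entry_def commD_delta)

lemma cmod_dentry: "cmod (dentry X m n) = \<bar>real_of_int (m - n)\<bar> * cmod (entry X m n)"
  unfolding dentry_def by (simp only: norm_mult norm_of_int)

text \<open>Off the diagonal the entries of X are dominated by those of [D,X]; on the diagonal the
  entries of [D,X] vanish.  This is the source of all estimates below.\<close>
lemma entry_le_dentry: assumes "m \<noteq> n" shows "cmod (entry X m n) \<le> cmod (dentry X m n)"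
proof -
  have "1 \<le> \<bar>real_of_int (m - n)\<bar>" using assms by linarith
  then show ?thesis
    unfolding cmod_dentry using mult_right_mono[of 1 _ "cmod (entry X m n)"] by simp
qed

text \<open>Since X is skew-adjoint, [D,X] is self-adjoint, so |[D,X]_mn| = |[D,X]_nm|.\<close>
lemma dentry_skew: "skew_adjoint X \<Longrightarrow> cmod (dentry X m n) = cmod (dentry X n m)"
  by (simp only: cmod_dentry entry_skew[of X m n] norm_minus_cancel complex_mod_cnj)
     (simp add: abs_minus_commute)

lemma gset_D: "X \<in> gset \<Longrightarrow> bounded_op X \<and> skew_adjoint X"
  by (simp add: gset_def)

lemma dentry_square_summable:
  "X \<in> gset \<Longrightarrow> (\<lambda>(m,n). (cmod (dentry X m n))\<^sup>2) summable_on UNIV"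
  unfolding gset_def hilbert_schmidt_entries_def by (simp add: entry_commD)

lemma dentry_swap_square_summable:
  "X \<in> gset \<Longrightarrow> (\<lambda>(m,n). (cmod (dentry X n m))\<^sup>2) summable_on UNIV"
  using dentry_square_summable by (simp add: dentry_skew[OF gset_D[THEN conjunct2]])

lemma dentry_row_ell2: "X \<in> gset \<Longrightarrow> (\<lambda>n. dentry X m n) \<in> ell2"
  using summable_on_pairD(1)[OF dentry_square_summable] unfolding ell2_def by blast

lemma dentry_col_ell2: "X \<in> gset \<Longrightarrow> (\<lambda>m. dentry X m n) \<in> ell2"
  using summable_on_pairD(1)[OF dentry_swap_square_summable] unfolding ell2_def by blast

lemma hs_norm_commD: "hs_norm (commD X) = sqrt (\<Sum>\<^sub>\<infinity>(m,n). (cmod (dentry X m n))\<^sup>2)"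
  by (simp add: hs_norm_def entry_commD)

section \<open>The cocycle as an absolutely convergent double sum\<close>

lemma omega_eq_diagonal_sum: "omega X W = (\<Sum>\<^sub>\<infinity>n. X (\<lambda>m. dentry W m n) n)"
  by (simp add: omega_def trc_def entry_def commD_delta)

lemma omega_double_sum:
  assumes "X \<in> gset" "\<And>n. (\<lambda>m. dentry W m n) \<in> ell2"
  shows "omega X W = (\<Sum>\<^sub>\<infinity>n. \<Sum>\<^sub>\<infinity>m. entry X n m * dentry W m n)"
  unfolding omega_eq_diagonal_sum
  using skew_apply_eq_row_sum[OF gset_D[OF assms(1), THEN conjunct2] assms(2)] by simp

text \<open>The summand X_nm [D,Y]_mn is dominated by |[D,X]_nm| |[D,Y]_nm|: it vanishes for m = n,
  and for m \<noteq> n use |X_nm| \<le> |[D,X]_nm| and the symmetry of |[D,Y]|.\<close>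
lemma omega_kernel_le:
  assumes "Y \<in> gset"
  shows "cmod (entry X n m * dentry Y m n) \<le> cmod (dentry X n m) * cmod (dentry Y n m)"
proof (cases "n = m")
  case False
  then show ?thesis
    using entry_le_dentry[OF False, of X] dentry_skew[OF gset_D[OF assms, THEN conjunct2], of m n]
    by (simp add: norm_mult mult_right_mono)
qed (simp add: dentry_def)

lemma dentry_pairing:
  assumes "X \<in> gset" "Y \<in> gset"
  shows "(\<lambda>(n,m). cmod (dentry X n m) * cmod (dentry Y n m)) summable_on UNIV"
    and "(\<Sum>\<^sub>\<infinity>(n,m). cmod (dentry X n m) * cmod (dentry Y n m))
           \<le> hs_norm (commD X) * hs_norm (commD Y)"
proof -
  have sq: "(\<lambda>p. (cmod (dentry Z (fst p) (snd p)))\<^sup>2) summable_on UNIV" if "Z \<in> gset" for Z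
    using dentry_square_summable[OF that] by (simp add: case_prod_unfold)
  show "(\<lambda>(n,m). cmod (dentry X n m) * cmod (dentry Y n m)) summable_on UNIV"
    using summable_on_mult_square_summable[OF sq sq, OF assms] by (simp add: case_prod_unfold)
  show "(\<Sum>\<^sub>\<infinity>(n,m). cmod (dentry X n m) * cmod (dentry Y n m))
           \<le> hs_norm (commD X) * hs_norm (commD Y)"
    using cauchy_schwarz_infsum[OF sq sq, OF assms] by (simp add: hs_norm_commD case_prod_unfold)
qed

lemma omega_kernel_abs_summable:
  assumes "X \<in> gset" "Y \<in> gset"
  shows "(\<lambda>(n,m). cmod (entry X n m * dentry Y m n)) summable_on UNIV"
  by (rule summable_on_comparison_test[OF dentry_pairing(1)[OF assms]])
     (auto simp: omega_kernel_le[OF assms(2)])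

lemma omega_kernel_summable:
  assumes "X \<in> gset" "Y \<in> gset"
  shows "(\<lambda>(n,m). entry X n m * dentry Y m n) summable_on UNIV"
  using abs_summable_summable[of "\<lambda>p. entry X (fst p) (snd p) * dentry Y (snd p) (fst p)" UNIV]
    omega_kernel_abs_summable[OF assms] by (simp add: case_prod_unfold)

lemma omega_pair_sum:
  assumes "X \<in> gset" "Y \<in> gset"
  shows "omega X Y = (\<Sum>\<^sub>\<infinity>(n,m). entry X n m * dentry Y m n)"
  using omega_double_sum[OF assms(1) dentry_col_ell2[OF assms(2)]]
    summable_on_pairD(3)[OF omega_kernel_summable[OF assms]] by simp

lemma omega_bound:
  assumes "X \<in> gset" "Y \<in> gset"
  shows "cmod (omega X Y) \<le> hs_norm (commD X) * hs_norm (commD Y)"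
proof -
  have "cmod (omega X Y) \<le> (\<Sum>\<^sub>\<infinity>(n,m). cmod (entry X n m * dentry Y m n))"
    unfolding omega_pair_sum[OF assms] case_prod_unfold
    by (rule norm_infsum_bound) (use omega_kernel_abs_summable[OF assms] in \<open>simp add: case_prod_unfold\<close>)
  also have "\<dots> \<le> (\<Sum>\<^sub>\<infinity>(n,m). cmod (dentry X n m) * cmod (dentry Y n m))"
    by (rule infsum_mono[OF omega_kernel_abs_summable[OF assms] dentry_pairing(1)[OF assms]])
       (auto simp: omega_kernel_le[OF assms(2)])
  also have "\<dots> \<le> hs_norm (commD X) * hs_norm (commD Y)"
    by (rule dentry_pairing(2)[OF assms])
  finally show ?thesis .
qed

text \<open>The norm of g dominates the Hilbert-Schmidt part (the diagonal supremum is nonnegative).\<close>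
lemma hs_norm_le_gnorm:
  assumes "X \<in> gset" shows "hs_norm (commD X) \<le> gnorm X"
proof -
  obtain K where "\<And>m n. cmod (entry X m n) \<le> K" using entry_bound gset_D[OF assms] by blast
  then have "bdd_above (range (\<lambda>n. cmod (entry X n n)))" unfolding bdd_above_def by auto
  then have "cmod (entry X 0 0) \<le> (SUP n. cmod (entry X n n))" by (rule cSUP_upper[rotated]) simp
  then show ?thesis unfolding gnorm_def using norm_ge_zero[of "entry X 0 0"] by linarith
qed

lemma hs_norm_nonneg: "0 \<le> hs_norm T"
  unfolding hs_norm_def by (intro real_sqrt_ge_zero infsum_nonneg) auto

lemma omega_continuous:
  assumes "X \<in> gset" "Y \<in> gset"
  shows "cmod (omega X Y) \<le> 1 * gnorm X * gnorm Y"
  using omega_bound[OF assms]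
    mult_mono[OF hs_norm_le_gnorm[OF assms(1)] hs_norm_le_gnorm[OF assms(2)]]
    order_trans[OF hs_norm_nonneg hs_norm_le_gnorm[OF assms(1)]] hs_norm_nonneg
  by force

text \<open>Skew-symmetry: after interchanging the two sums, the summands of omega(Y,X) and omega(X,Y)
  differ only in the sign of the factor m - n.\<close>
lemma omega_skew:
  assumes "X \<in> gset" "Y \<in> gset"
  shows "omega X Y = - omega Y X"
proof -
  have "omega Y X = (\<Sum>\<^sub>\<infinity>n. \<Sum>\<^sub>\<infinity>m. entry Y n m * dentry X m n)"
    by (rule omega_double_sum[OF assms(2) dentry_col_ell2[OF assms(1)]])
  also have "\<dots> = (\<Sum>\<^sub>\<infinity>m. \<Sum>\<^sub>\<infinity>n. entry Y n m * dentry X m n)"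
    by (rule infsum_swap_banach)
       (use omega_kernel_summable[OF assms(2,1)] in simp)
  also have "\<dots> = (\<Sum>\<^sub>\<infinity>m. \<Sum>\<^sub>\<infinity>n. - (entry X m n * dentry Y n m))"
    by (intro infsum_cong) (simp add: dentry_def algebra_simps)
  also have "\<dots> = - omega X Y"
    by (simp add: infsum_uminus omega_double_sum[OF assms(1) dentry_col_ell2[OF assms(2)]])
  finally show ?thesis by simp
qed

text \<open>Real bilinearity.  In the first argument it holds term by term; in the second it uses the
  linearity of the first operator.\<close>
lemma entry_comb:
  "entry (op_add (op_scale a X) (op_scale b Y)) m n = of_real a * entry X m n + of_real b * entry Y m n"
  by (simp add: entry_def op_add_def op_scale_def)

lemma dentry_comb:
  "dentry (op_add (op_scale a X) (op_scale b Y)) m n = of_real a * dentry X m n + of_real b * dentry Y m n"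
  by (simp add: dentry_def entry_comb algebra_simps)

lemma omega_diagonal_summable:
  assumes "X \<in> gset" "Y \<in> gset"
  shows "(\<lambda>n. X (\<lambda>m. dentry Y m n) n) summable_on UNIV"
  using summable_on_pairD(2)[OF omega_kernel_summable[OF assms]]
    skew_apply_eq_row_sum[OF gset_D[OF assms(1), THEN conjunct2] dentry_col_ell2[OF assms(2)]]
  by simp

lemma omega_linear_left:
  assumes "X \<in> gset" "Y \<in> gset" "Z \<in> gset"
  shows "omega (op_add (op_scale a X) (op_scale b Y)) Z = of_real a * omega X Z + of_real b * omega Y Z"
  unfolding omega_eq_diagonal_sum
  by (simp add: op_add_def op_scale_def, subst infsum_add)
     (auto intro!: summable_on_cmult_right omega_diagonal_summable assms simp: infsum_cmult_right')

lemma omega_linear_right: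
  assumes "X \<in> gset" "Y \<in> gset" "Z \<in> gset"
  shows "omega Z (op_add (op_scale a X) (op_scale b Y)) = of_real a * omega Z X + of_real b * omega Z Y"
proof -
  have lin: "linear_on_l2 Z" using gset_D[OF assms(3)] by (simp add: bounded_op_def)
  have cols: "(\<lambda>m. of_real a * dentry X m n) \<in> ell2" "(\<lambda>m. of_real b * dentry Y m n) \<in> ell2"
    "(\<lambda>m. dentry X m n) \<in> ell2" "(\<lambda>m. dentry Y m n) \<in> ell2" for n
    by (intro ell2_scale dentry_col_ell2 assms)+
  have "Z (\<lambda>m. dentry (op_add (op_scale a X) (op_scale b Y)) m n) n =
        of_real a * Z (\<lambda>m. dentry X m n) n + of_real b * Z (\<lambda>m. dentry Y m n) n" for n
    using lin cols[of n] unfolding dentry_comb linear_on_l2_def by simp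
  then show ?thesis
    unfolding omega_eq_diagonal_sum
    by (simp, subst infsum_add)
       (auto intro!: summable_on_cmult_right omega_diagonal_summable assms simp: infsum_cmult_right')
qed

section \<open>The cocycle identity\<close>

definition mat_prod :: "op \<Rightarrow> op \<Rightarrow> int \<Rightarrow> int \<Rightarrow> complex" where
  "mat_prod A B m n = (\<Sum>\<^sub>\<infinity>k. entry A m k * entry B k n)"

lemma entry_lie:
  assumes "Y \<in> gset" "Z \<in> gset"
  shows "entry (lie Y Z) m n = mat_prod Y Z m n - mat_prod Z Y m n"
proof -
  have "A (B (delta n)) m = mat_prod A B m n" if "A \<in> gset" "B \<in> gset" for A B
    using skew_apply_eq_row_sum[of A "B (delta n)" m] col_ell2[of B n] gset_D[OF that(1)] gset_D[OF that(2)]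
    by (simp add: mat_prod_def entry_def)
  then show ?thesis using assms by (simp add: entry_def lie_def)
qed

definition dprod_left :: "op \<Rightarrow> op \<Rightarrow> int \<Rightarrow> int \<Rightarrow> complex" where
  "dprod_left A B m n = (\<Sum>\<^sub>\<infinity>k. dentry A m k * entry B k n)"

definition dprod_right :: "op \<Rightarrow> op \<Rightarrow> int \<Rightarrow> int \<Rightarrow> complex" where
  "dprod_right A B m n = (\<Sum>\<^sub>\<infinity>k. entry A m k * dentry B k n)"

lemma leibniz_entries:
  assumes A: "A \<in> gset" and B: "B \<in> gset"
  shows "of_int (m - n) * mat_prod A B m n = dprod_left A B m n + dprod_right A B m n"
proof -
  have s1: "(\<lambda>k. dentry A m k * entry B k n) summable_on UNIV"
    using ell2_prod_summable[OF dentry_row_ell2[OF A] col_ell2] gset_D[OF B] by blast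
  have s2: "(\<lambda>k. entry A m k * dentry B k n) summable_on UNIV"
    using ell2_prod_summable[OF row_ell2 dentry_col_ell2[OF B]] gset_D[OF A] by blast
  have "of_int (m - n) * mat_prod A B m n = (\<Sum>\<^sub>\<infinity>k. of_int (m - n) * (entry A m k * entry B k n))"
    by (simp add: mat_prod_def infsum_cmult_right')
  also have "\<dots> = (\<Sum>\<^sub>\<infinity>k. dentry A m k * entry B k n + entry A m k * dentry B k n)"
    by (rule infsum_cong) (simp add: dentry_def algebra_simps)
  also have "\<dots> = dprod_left A B m n + dprod_right A B m n"
    unfolding dprod_left_def dprod_right_def by (rule infsum_add[OF s1 s2])
  finally show ?thesis .
qed

text \<open>A[D,B] has l2 columns because A is bounded; [D,A]B has l2 columns because [D,A] is
  Hilbert-Schmidt and the columns of B are bounded in l2.\<close>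
lemma dprod_right_col_ell2:
  assumes A: "A \<in> gset" and B: "B \<in> gset" shows "(\<lambda>m. dprod_right A B m n) \<in> ell2"
proof -
  have "(\<lambda>m. dprod_right A B m n) = A (\<lambda>k. dentry B k n)"
    using skew_apply_eq_row_sum[of A "\<lambda>k. dentry B k n"] gset_D[OF A] dentry_col_ell2[OF B]
    by (auto simp: dprod_right_def)
  then show ?thesis
    using gset_D[OF A] dentry_col_ell2[OF B] unfolding bounded_op_def by simp
qed

lemma dprod_left_col_ell2:
  assumes A: "A \<in> gset" and B: "B \<in> gset" shows "(\<lambda>m. dprod_left A B m n) \<in> ell2"
proof -
  define R where "R m = (\<Sum>\<^sub>\<infinity>k. (cmod (dentry A m k))\<^sup>2)" for m
  define S where "S = (\<Sum>\<^sub>\<infinity>k. (cmod (entry B k n))\<^sup>2)"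
  have col: "(\<lambda>k. entry B k n) \<in> ell2" using col_ell2 gset_D[OF B] by blast
  have "(cmod (dprod_left A B m n))\<^sup>2 \<le> R m * S" for m
  proof -
    have "cmod (dprod_left A B m n) \<le> (\<Sum>\<^sub>\<infinity>k. cmod (dentry A m k) * cmod (entry B k n))"
      unfolding dprod_left_def norm_mult[symmetric]
      by (rule norm_infsum_bound) (use ell2_prod_abs_summable[OF dentry_row_ell2[OF A] col] in \<open>simp add: norm_mult\<close>)
    also have "\<dots> \<le> sqrt (R m) * sqrt S"
      unfolding R_def S_def
      by (rule cauchy_schwarz_infsum) (use dentry_row_ell2[OF A] col in \<open>simp_all add: ell2_def\<close>)
    finally have "(cmod (dprod_left A B m n))\<^sup>2 \<le> (sqrt (R m) * sqrt S)\<^sup>2"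
      by (rule power_mono) simp
    then show ?thesis by (simp add: power_mult_distrib R_def S_def infsum_nonneg)
  qed
  moreover have "(\<lambda>m. R m * S) summable_on UNIV"
    unfolding R_def by (rule summable_on_cmult_left[OF summable_on_pairD(2)[OF dentry_square_summable[OF A]]])
  ultimately show ?thesis
    unfolding ell2_def by (auto intro: summable_on_comparison_test)
qed

text \<open>Hence [D,[Y,Z]] has l2 columns, so the double-sum formula for omega(X,[Y,Z]) applies.\<close>
lemma dentry_lie_col_ell2:
  assumes Y: "Y \<in> gset" and Z: "Z \<in> gset"
  shows "(\<lambda>m. dentry (lie Y Z) m n) \<in> ell2"
proof -
  have "(\<lambda>m. dentry (lie Y Z) m n) =
      (\<lambda>m. (dprod_left Y Z m n + dprod_right Y Z m n) - (dprod_left Z Y m n + dprod_right Z Y m n))"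
    by (rule ext)
       (simp only: dentry_def entry_lie[OF Y Z] right_diff_distrib leibniz_entries[OF Y Z] leibniz_entries[OF Z Y])
  then show ?thesis
    by (simp add: ell2_diff ell2_add dprod_left_col_ell2 dprod_right_col_ell2 Y Z)
qed

definition tri_sum :: "op \<Rightarrow> op \<Rightarrow> op \<Rightarrow> complex" where
  "tri_sum A B C = (\<Sum>\<^sub>\<infinity>(a,b,c). dentry A a b * entry B b c * entry C c a)"

text \<open>Domination of the summand of tri_sum: off the diagonals the entries of B and C are
  dominated by those of [D,B] and [D,C]; the two diagonals c = b and c = a are controlled by
  the bounds KB and KC on the entries of B and C.\<close>
lemma tri_summand_le:
  assumes B: "B \<in> gset" and C: "C \<in> gset"
    and KB: "\<And>m n. cmod (entry B m n) \<le> KB" and KC: "\<And>m n. cmod (entry C m n) \<le> KC"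
  shows "cmod (dentry A a b * entry B b c * entry C c a) \<le>
    (if c = b then KB * (cmod (dentry A a b) * cmod (dentry C a b)) else 0) +
    (if c = a then KC * (cmod (dentry A a b) * cmod (dentry B a b)) else 0) +
    cmod (dentry A a b) * cmod (dentry B b c) * cmod (dentry C c a)"
    (is "?lhs \<le> ?t1 + ?t2 + ?t3")
proof -
  have KB0: "0 \<le> KB" and KC0: "0 \<le> KC" using KB[of 0 0] KC[of 0 0] norm_ge_zero order_trans by blast+
  have nonneg: "0 \<le> ?t1" "0 \<le> ?t2" "0 \<le> ?t3" using KB0 KC0 by auto
  have lhs: "?lhs = cmod (dentry A a b) * cmod (entry B b c) * cmod (entry C c a)"
    by (simp add: norm_mult)
  have skB: "cmod (dentry B b a) = cmod (dentry B a b)" and skC: "cmod (dentry C b a) = cmod (dentry C a b)"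
    using dentry_skew gset_D[OF B] gset_D[OF C] by blast+
  consider "a = b" | "a \<noteq> b" "c = b" | "a \<noteq> b" "c \<noteq> b" "c = a" | "a \<noteq> b" "c \<noteq> b" "c \<noteq> a"
    by blast
  then show ?thesis
  proof cases
    case 1
    then show ?thesis using nonneg by (simp add: dentry_def)
  next
    case 2
    then have "?lhs \<le> cmod (dentry A a b) * KB * cmod (dentry C a b)"
      unfolding lhs using KB[of b b] KB0 entry_le_dentry[of b a C] skC
      by (intro mult_mono mult_left_mono) auto
    also have "\<dots> = ?t1" using 2 by (simp add: mult_ac)
    finally show ?thesis using nonneg by linarith
  next
    case 3
    then have "?lhs \<le> cmod (dentry A a b) * cmod (dentry B a b) * KC"
      unfolding lhs using KC[of a a] KC0 entry_le_dentry[of b a B] skB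
      by (intro mult_mono mult_left_mono) auto
    also have "\<dots> = ?t2" using 3 by (simp add: mult_ac)
    finally show ?thesis using nonneg by linarith
  next
    case 4
    then have "?lhs \<le> ?t3"
      unfolding lhs using entry_le_dentry[of b c B] entry_le_dentry[of c a C]
      by (intro mult_mono mult_left_mono) auto
    then show ?thesis using nonneg by linarith
  qed
qed

text \<open>The triple sum tri_sum converges absolutely: the summand is dominated by two terms
  supported on diagonals (summable by dentry_pairing) and one handled by triple_summable.\<close>
lemma tri_summable:
  assumes A: "A \<in> gset" and B: "B \<in> gset" and C: "C \<in> gset"
  shows "(\<lambda>(a,b,c). dentry A a b * entry B b c * entry C c a) summable_on UNIV"
proof -
  obtain KB KC where KB: "\<And>m n. cmod (entry B m n) \<le> KB" and KC: "\<And>m n. cmod (entry C m n) \<le> KC"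
    using entry_bound gset_D[OF B] gset_D[OF C] by metis
  have diag1: "(\<lambda>(a,b,c). if c = b then KB * (cmod (dentry A a b) * cmod (dentry C a b)) else 0)
      summable_on UNIV"
    by (rule summable_on_from_injective[of "\<lambda>(a,b). (a,b,b)"])
       (use summable_on_cmult_right[OF dentry_pairing(1)[OF A C], of KB] in
        \<open>auto simp: inj_def o_def case_prod_unfold image_iff\<close>)
  have diag2: "(\<lambda>(a,b,c). if c = a then KC * (cmod (dentry A a b) * cmod (dentry B a b)) else 0)
      summable_on UNIV"
    by (rule summable_on_from_injective[of "\<lambda>(a,b). (a,b,a)"])
       (use summable_on_cmult_right[OF dentry_pairing(1)[OF A B], of KC] in
        \<open>auto simp: inj_def o_def case_prod_unfold image_iff\<close>)
  have offdiag: "(\<lambda>(a,b,c). cmod (dentry A a b) * cmod (dentry B b c) * cmod (dentry C c a)) summable_on UNIV"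
    by (rule triple_summable) (auto intro: dentry_square_summable A B C)
  have "(\<lambda>p. norm ((\<lambda>(a,b,c). dentry A a b * entry B b c * entry C c a) p)) summable_on UNIV"
    by (rule summable_on_comparison_test[OF summable_on_add[OF summable_on_add[OF diag1 diag2] offdiag]])
       (auto simp: tri_summand_le[OF B C KB KC])
  then show ?thesis by (rule abs_summable_summable)
qed

lemma tri_sum_iterated:
  assumes A: "A \<in> gset" and B: "B \<in> gset" and C: "C \<in> gset"
  shows "(\<lambda>b. dentry A a b * mat_prod B C b a) summable_on UNIV"
    and "(\<lambda>a. \<Sum>\<^sub>\<infinity>b. dentry A a b * mat_prod B C b a) summable_on UNIV"
    and "tri_sum A B C = (\<Sum>\<^sub>\<infinity>a. \<Sum>\<^sub>\<infinity>b. dentry A a b * mat_prod B C b a)"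
proof -
  define g where "g a = (\<lambda>(b,c). dentry A a b * entry B b c * entry C c a)" for a
  have tri: "(\<lambda>(a,p). g a p) summable_on UNIV"
    using tri_summable[OF A B C] by (simp add: g_def)
  have inner: "(\<Sum>\<^sub>\<infinity>c. dentry A a b * entry B b c * entry C c a) = dentry A a b * mat_prod B C b a" for a b
    by (simp add: mat_prod_def mult.assoc infsum_cmult_right')
  have ga: "(\<lambda>(b,c). dentry A a b * entry B b c * entry C c a) summable_on UNIV" for a
    using summable_on_pairD(1)[OF tri] by (simp add: g_def)
  have row: "(\<lambda>b. dentry A a b * mat_prod B C b a) summable_on UNIV \<and>
      infsum (g a) UNIV = (\<Sum>\<^sub>\<infinity>b. dentry A a b * mat_prod B C b a)" for a
    using summable_on_pairD(2,3)[OF ga[of a]] by (simp add: inner g_def)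
  then show "(\<lambda>b. dentry A a b * mat_prod B C b a) summable_on UNIV" by blast
  show "(\<lambda>a. \<Sum>\<^sub>\<infinity>b. dentry A a b * mat_prod B C b a) summable_on UNIV"
    using summable_on_pairD(2)[OF tri] row by simp
  have "tri_sum A B C = (\<Sum>\<^sub>\<infinity>(a,p). g a p)" by (simp add: tri_sum_def g_def case_prod_unfold)
  also have "\<dots> = (\<Sum>\<^sub>\<infinity>a. infsum (g a) UNIV)" using summable_on_pairD(3)[OF tri] by simp
  finally show "tri_sum A B C = (\<Sum>\<^sub>\<infinity>a. \<Sum>\<^sub>\<infinity>b. dentry A a b * mat_prod B C b a)" using row by simp
qed

text \<open>Since X_nm (m - n) = -[D,X]_nm, the summand X_nm [D,[Y,Z]]_mn equals
  [D,X]_nm ((ZY)_mn - (YZ)_mn); hence omega(X,[Y,Z]) = tr([D,X]ZY) - tr([D,X]YZ).\<close>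
lemma omega_lie:
  assumes X: "X \<in> gset" and Y: "Y \<in> gset" and Z: "Z \<in> gset"
  shows "omega X (lie Y Z) = tri_sum X Z Y - tri_sum X Y Z"
proof -
  have "omega X (lie Y Z) = (\<Sum>\<^sub>\<infinity>n. \<Sum>\<^sub>\<infinity>m. entry X n m * dentry (lie Y Z) m n)"
    by (rule omega_double_sum[OF X dentry_lie_col_ell2[OF Y Z]])
  also have "\<dots> = (\<Sum>\<^sub>\<infinity>n. \<Sum>\<^sub>\<infinity>m. dentry X n m * mat_prod Z Y m n - dentry X n m * mat_prod Y Z m n)"
    by (intro infsum_cong) (simp add: dentry_def entry_lie[OF Y Z] algebra_simps)
  also have "\<dots> = (\<Sum>\<^sub>\<infinity>n. (\<Sum>\<^sub>\<infinity>m. dentry X n m * mat_prod Z Y m n) - (\<Sum>\<^sub>\<infinity>m. dentry X n m * mat_prod Y Z m n))"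
    by (intro infsum_cong infsum_diff tri_sum_iterated X Y Z)
  also have "\<dots> = tri_sum X Z Y - tri_sum X Y Z"
    by (simp add: infsum_diff tri_sum_iterated X Y Z)
  finally show ?thesis .
qed

text \<open>The cyclic sum of tri_sum vanishes: after rotating the summation indices the three
  summands add up to ((a - b) + (b - c) + (c - a)) X_ab Y_bc Z_ca = 0.\<close>
lemma tri_sum_cyclic:
  assumes X: "X \<in> gset" and Y: "Y \<in> gset" and Z: "Z \<in> gset"
  shows "tri_sum X Y Z + tri_sum Y Z X + tri_sum Z X Y = 0"
proof -
  define h1 where "h1 = (\<lambda>(a::int,b::int,c::int). dentry X a b * entry Y b c * entry Z c a)"
  define h2 where "h2 = (\<lambda>(a::int,b::int,c::int). dentry Y a b * entry Z b c * entry X c a)"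
  define h3 where "h3 = (\<lambda>(a::int,b::int,c::int). dentry Z a b * entry X b c * entry Y c a)"
  define \<sigma> :: "int \<times> int \<times> int \<Rightarrow> int \<times> int \<times> int" where "\<sigma> = (\<lambda>(a,b,c). (b,c,a))"
  define \<tau> :: "int \<times> int \<times> int \<Rightarrow> int \<times> int \<times> int" where "\<tau> = (\<lambda>(a,b,c). (c,a,b))"
  have bij: "inj \<sigma>" "inj \<tau>" "range \<sigma> = UNIV" "range \<tau> = UNIV"
    by (auto simp: inj_def \<sigma>_def \<tau>_def image_iff)
  have s1: "h1 summable_on UNIV" unfolding h1_def by (rule tri_summable[OF X Y Z])
  have s2: "(h2 \<circ> \<sigma>) summable_on UNIV"
    using summable_on_reindex[OF bij(1), of h2] tri_summable[OF Y Z X] bij by (simp add: h2_def)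
  have s3: "(h3 \<circ> \<tau>) summable_on UNIV"
    using summable_on_reindex[OF bij(2), of h3] tri_summable[OF Z X Y] bij by (simp add: h3_def)
  have "tri_sum X Y Z + tri_sum Y Z X + tri_sum Z X Y =
      infsum h1 UNIV + infsum (h2 \<circ> \<sigma>) UNIV + infsum (h3 \<circ> \<tau>) UNIV"
    using infsum_reindex[OF bij(1), of h2] infsum_reindex[OF bij(2), of h3] bij
    by (simp add: tri_sum_def h1_def h2_def h3_def)
  also have "\<dots> = (\<Sum>\<^sub>\<infinity>p. h1 p + (h2 \<circ> \<sigma>) p) + infsum (h3 \<circ> \<tau>) UNIV"
    by (subst infsum_add[OF s1 s2]) simp
  also have "\<dots> = (\<Sum>\<^sub>\<infinity>p. h1 p + (h2 \<circ> \<sigma>) p + (h3 \<circ> \<tau>) p)"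
    by (rule infsum_add[symmetric, OF summable_on_add[OF s1 s2] s3])
  also have "\<dots> = 0"
    by (rule infsum_0) (auto simp: h1_def h2_def h3_def \<sigma>_def \<tau>_def dentry_def algebra_simps)
  finally show ?thesis .
qed

text \<open>The cocycle identity: the six triple sums cancel in two cyclic groups.\<close>
theorem omega_cocycle:
  assumes X: "X \<in> gset" and Y: "Y \<in> gset" and Z: "Z \<in> gset"
  shows "omega X (lie Y Z) + omega Y (lie Z X) + omega Z (lie X Y) = 0"
proof -
  have "omega X (lie Y Z) + omega Y (lie Z X) + omega Z (lie X Y) =
      (tri_sum X Z Y + tri_sum Z Y X + tri_sum Y X Z) - (tri_sum X Y Z + tri_sum Y Z X + tri_sum Z X Y)"
    by (simp add: omega_lie X Y Z)
  also have "\<dots> = 0" using tri_sum_cyclic[OF X Y Z] tri_sum_cyclic[OF X Z Y] by simp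
  finally show ?thesis .
qed

section \<open>Non-triviality\<close>

lemma gset_finite_support:
  assumes K: "finite K" and lin: "linear_on_l2 T" and supp: "\<And>x m. m \<notin> K \<Longrightarrow> T x m = 0"
    and contr: "\<And>x. x \<in> ell2 \<Longrightarrow> (\<Sum>\<^sub>\<infinity>m. (cmod (T x m))\<^sup>2) \<le> (\<Sum>\<^sub>\<infinity>m. (cmod (x m))\<^sup>2)"
    and skew: "skew_adjoint T"
  shows "T \<in> gset"
proof -
  have l2: "T x \<in> ell2" for x
    unfolding ell2_def mem_Collect_eq by (rule infsum_finite_support(1)[OF K]) (use supp in auto)
  have "l2norm (T x) \<le> 1 * l2norm x" if "x \<in> ell2" for x
    using contr[OF that] by (simp add: l2norm_def)
  then have bounded: "bounded_op T" using lin l2 unfolding bounded_op_def by blast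
  have row_zero: "entry T i j = 0" if "i \<notin> K" for i j using supp that by (simp add: entry_def)
  have dentry_zero: "dentry T i j = 0" if "(i, j) \<notin> K \<times> K" for i j
    using that row_zero[of i j] row_zero[of j i] entry_skew[OF skew, of i j] by (auto simp: dentry_def)
  have "hilbert_schmidt_entries (commD T)"
    unfolding hilbert_schmidt_entries_def entry_commD
  proof (rule infsum_finite_support(1)[of "K \<times> K"])
    show "(\<lambda>(i,j). (cmod (dentry T i j))\<^sup>2) p = 0" if "p \<notin> K \<times> K" for p
      using that dentry_zero by (cases p) auto
  qed (simp add: K)
  then show ?thesis using bounded skew by (simp add: gset_def)
qed

definition iproj :: "int \<Rightarrow> op" where
  "iproj n = (\<lambda>x m. if m = n then \<i> * x n else 0)"

definition rot_op :: "int \<Rightarrow> op" where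
  "rot_op n = (\<lambda>x m. (if m = n then x 0 else 0) - (if m = 0 then x n else 0))"

definition sym_op :: "int \<Rightarrow> op" where
  "sym_op n = (\<lambda>x m. \<i> * ((if m = n then x 0 else 0) + (if m = 0 then x n else 0)))"

lemma iproj_gset: "iproj n \<in> gset"
proof (rule gset_finite_support[of "{n}"])
  show "linear_on_l2 (iproj n)" by (simp add: linear_on_l2_def iproj_def fun_eq_iff algebra_simps)
  show "(\<Sum>\<^sub>\<infinity>m. (cmod (iproj n x m))\<^sup>2) \<le> (\<Sum>\<^sub>\<infinity>m. (cmod (x m))\<^sup>2)" if "x \<in> ell2" for x
    using ell2_finite_sum_le[OF that, of "{n}"]
    by (subst infsum_finite_support(2)[of "{n}"]) (auto simp: iproj_def norm_mult)
  show "skew_adjoint (iproj n)"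
    unfolding skew_adjoint_def l2inner_def
    by (subst (1 2) infsum_finite_support(2)[of "{n}"]) (auto simp: iproj_def)
qed (auto simp: iproj_def)

lemma rot_op_gset:
  assumes "n \<noteq> 0" shows "rot_op n \<in> gset"
proof (rule gset_finite_support[of "{0, n}"])
  show "linear_on_l2 (rot_op n)" by (simp add: linear_on_l2_def rot_op_def fun_eq_iff algebra_simps)
  show "(\<Sum>\<^sub>\<infinity>m. (cmod (rot_op n x m))\<^sup>2) \<le> (\<Sum>\<^sub>\<infinity>m. (cmod (x m))\<^sup>2)" if "x \<in> ell2" for x
    using ell2_finite_sum_le[OF that, of "{0, n}"] assms
    by (subst infsum_finite_support(2)[of "{0, n}"]) (auto simp: rot_op_def add.commute)
  show "skew_adjoint (rot_op n)"
    unfolding skew_adjoint_def l2inner_def using assms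
    by (subst (1 2) infsum_finite_support(2)[of "{0, n}"]) (auto simp: rot_op_def algebra_simps)
qed (auto simp: rot_op_def)

lemma sym_op_gset:
  assumes "n \<noteq> 0" shows "sym_op n \<in> gset"
proof (rule gset_finite_support[of "{0, n}"])
  show "linear_on_l2 (sym_op n)" by (simp add: linear_on_l2_def sym_op_def fun_eq_iff algebra_simps)
  show "(\<Sum>\<^sub>\<infinity>m. (cmod (sym_op n x m))\<^sup>2) \<le> (\<Sum>\<^sub>\<infinity>m. (cmod (x m))\<^sup>2)" if "x \<in> ell2" for x
    using ell2_finite_sum_le[OF that, of "{0, n}"] assms
    by (subst infsum_finite_support(2)[of "{0, n}"]) (auto simp: sym_op_def norm_mult add.commute)
  show "skew_adjoint (sym_op n)"
    unfolding skew_adjoint_def l2inner_def using assms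
    by (subst (1 2) infsum_finite_support(2)[of "{0, n}"]) (auto simp: sym_op_def algebra_simps)
qed (auto simp: sym_op_def)

lemma gnorm_iproj: "0 \<le> gnorm (iproj n)" "gnorm (iproj n) \<le> 1"
proof -
  show "0 \<le> gnorm (iproj n)"
    using hs_norm_nonneg hs_norm_le_gnorm[OF iproj_gset] by (rule order_trans)
  have "(SUP m. cmod (entry (iproj n) m m)) \<le> 1"
    by (rule cSUP_least) (auto simp: entry_def iproj_def delta_def)
  moreover have "dentry (iproj n) i j = 0" for i j
    by (auto simp: dentry_def entry_def iproj_def delta_def)
  then have "hs_norm (commD (iproj n)) = 0" by (simp add: hs_norm_commD case_prod_unfold)
  ultimately show "gnorm (iproj n) \<le> 1" by (simp add: gnorm_def)
qed

lemma lie_rot_sym: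
  assumes "n \<noteq> 0"
  shows "lie (rot_op n) (sym_op n) = op_add (op_scale 2 (iproj n)) (op_scale (-2) (iproj 0))"
  using assms by (auto simp: fun_eq_iff lie_def rot_op_def sym_op_def iproj_def op_add_def op_scale_def)

lemma omega_rot_sym:
  assumes "n \<noteq> 0" shows "omega (rot_op n) (sym_op n) = - 2 * of_int n * \<i>"
  unfolding omega_eq_diagonal_sum
  by (subst infsum_finite_support(2)[of "{0, n}"])
     (use assms in \<open>auto simp: rot_op_def sym_op_def dentry_def entry_def delta_def algebra_simps\<close>)

text \<open>A continuous linear theta with omega = theta o [.,.] would give
  2|n| = |omega(X_n,Y_n)| = 2|theta(iP_n) - theta(iP_0)| <= 4|C| for every n.\<close>
lemma omega_not_coboundary:
  assumes lin: "\<forall>X\<in>gset. \<forall>Y\<in>gset. \<forall>a b::real.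
      \<theta> (op_add (op_scale a X) (op_scale b Y)) = of_real a * \<theta> X + of_real b * \<theta> Y"
    and bounded: "\<forall>X\<in>gset. cmod (\<theta> X) \<le> C * gnorm X"
    and coboundary: "\<forall>X\<in>gset. \<forall>Y\<in>gset. omega X Y = \<theta> (lie X Y)"
  shows False
proof -
  have theta_iproj: "cmod (\<theta> (iproj k)) \<le> \<bar>C\<bar>" for k
  proof -
    have "cmod (\<theta> (iproj k)) \<le> C * gnorm (iproj k)" using bounded iproj_gset by blast
    also have "\<dots> \<le> \<bar>C\<bar> * 1"
      using gnorm_iproj[of k] by (intro mult_mono) auto
    finally show ?thesis by simp
  qed
  define n :: int where "n = \<lceil>2 * \<bar>C\<bar>\<rceil> + 1"
  have n: "n \<noteq> 0" "2 * \<bar>C\<bar> < \<bar>real_of_int n\<bar>" unfolding n_def by linarith+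
  have "- 2 * of_int n * \<i> = \<theta> (lie (rot_op n) (sym_op n))"
    using coboundary rot_op_gset[OF n(1)] sym_op_gset[OF n(1)] omega_rot_sym[OF n(1)] by simp
  also have "\<dots> = 2 * (\<theta> (iproj n) - \<theta> (iproj 0))"
    using lin iproj_gset by (simp add: lie_rot_sym[OF n(1)] algebra_simps)
  finally have "2 * \<bar>real_of_int n\<bar> = 2 * cmod (\<theta> (iproj n) - \<theta> (iproj 0))"
    by (metis norm_mult norm_of_int mult_minus_left norm_minus_cancel norm_ii mult_1_right norm_numeral)
  also have "\<dots> \<le> 2 * (cmod (\<theta> (iproj n)) + cmod (\<theta> (iproj 0)))"
    by (rule mult_left_mono[OF norm_triangle_ineq4]) simp
  also have "\<dots> \<le> 2 * (\<bar>C\<bar> + \<bar>C\<bar>)"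
    using theta_iproj[of n] theta_iproj[of 0] by simp
  finally show False using n(2) by simp
qed

theorem lemma2p1:
  shows "(\<forall>X\<in>gset. \<forall>Y\<in>gset. \<forall>Z\<in>gset. \<forall>a b::real.
            omega (op_add (op_scale a X) (op_scale b Y)) Z = of_real a * omega X Z + of_real b * omega Y Z \<and>
            omega Z (op_add (op_scale a X) (op_scale b Y)) = of_real a * omega Z X + of_real b * omega Z Y)
       \<and> (\<exists>C. \<forall>X\<in>gset. \<forall>Y\<in>gset. cmod (omega X Y) \<le> C * gnorm X * gnorm Y)
       \<and> (\<forall>X\<in>gset. \<forall>Y\<in>gset. omega X Y = - omega Y X)
       \<and> (\<forall>X\<in>gset. \<forall>Y\<in>gset. \<forall>Z\<in>gset.
            omega X (lie Y Z) + omega Y (lie Z X) + omega Z (lie X Y) = 0)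
       \<and> \<not> (\<exists>\<theta> :: op \<Rightarrow> complex.
            (\<forall>X\<in>gset. \<forall>Y\<in>gset. \<forall>a b::real.
               \<theta> (op_add (op_scale a X) (op_scale b Y)) = of_real a * \<theta> X + of_real b * \<theta> Y)
            \<and> (\<exists>C. \<forall>X\<in>gset. cmod (\<theta> X) \<le> C * gnorm X)
            \<and> (\<forall>X\<in>gset. \<forall>Y\<in>gset. omega X Y = \<theta> (lie X Y)))"
proof (intro conjI ballI allI notI)
  show "\<exists>C. \<forall>X\<in>gset. \<forall>Y\<in>gset. cmod (omega X Y) \<le> C * gnorm X * gnorm Y"
    using omega_continuous by blast
qed (auto intro: omega_linear_left omega_linear_right omega_skew omega_cocycle omega_not_coboundary)

end
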